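(* Let $\bm X=X_1\times\cdots\times X_n\in\mathbb{IR}^n$ with $\operatorname{wid}(X_i)>0$ for at least one $i$; define $\mathcal P=\{j:\operatorname{wid}(X_j)>0\}$, $\theta_i=\operatorname{wid}(X_i)/\sum_{j\in\mathcal P}\operatorname{wid}(X_j)$ for $i\in\mathcal P$, $\underline\sigma=\sum_i\underline X_i$, $\overline\sigma=\sum_i\overline X_i$. Let $\varphi:[\underline\sigma,\overline\sigma]\to\mathbb{R}$ be convex and let $\sigma^\ast\in[\underline\sigma,\overline\sigma]$ be a minimizer of $\varphi$ on $[\underline\sigma,\overline\sigma]$. Define, for $i\in\mathcal P$ and $x_i\in X_i$, $$f^{\rm u}_i(x_i)=\varphi\big(\min\{x_i-\overline X_i+\overline\sigma,\sigma^\ast\}\big)+\varphi\big(\max\{x_i-\underline X_i+\underline\sigma,\sigma^\ast\}\big)-(2-\theta_i)\varphi(\sigma^\ast),$$ and $f^{\rm u}_i\equiv 0$ for $i\notin\mathcal P$. Then (i) $\sum_{i=1}^n f^{\rm u}_i(x_i)\le\varphi\big(\sum_{i=1}^n x_i\big)$ for all $\bm x\in\bm X$; and (ii) $\sum_{i=1}^n f^{\rm u}_i(x_i)=\varphi(\sigma^\ast)$ at every $\bm x\in\bm X$ satisfying $x_i\in[\sigma^\ast+\overline X_i-\overline\sigma,\ \sigma^\ast+\underline X_i-\underline\sigma]$ for all $i$.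
   Context: $\mathbb{IR}^n$ is the set of boxes $\bm X=X_1\times\cdots\times X_n$ with $X_i=[\underline X_i,\overline X_i]$ compact real intervals; $\operatorname{wid}(X_i)=\overline X_i-\underline X_i$. *)

theory Defs
  imports "HOL-Analysis.Analysis"
begin

text \<open>A box X = X_0 x ... x X_{n-1} is given by lower endpoints lo and upper endpoints hi
  (indices i < n). wid(X_i) = hi i - lo i.\<close>

definition wid_box :: "(nat \<Rightarrow> real) \<Rightarrow> (nat \<Rightarrow> real) \<Rightarrow> nat \<Rightarrow> real" where
  "wid_box lo hi i = hi i - lo i"

definition posidx :: "nat \<Rightarrow> (nat \<Rightarrow> real) \<Rightarrow> (nat \<Rightarrow> real) \<Rightarrow> nat set" where
  "posidx n lo hi = {j. j < n \<and> wid_box lo hi j > 0}"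

definition theta :: "nat \<Rightarrow> (nat \<Rightarrow> real) \<Rightarrow> (nat \<Rightarrow> real) \<Rightarrow> nat \<Rightarrow> real" where
  "theta n lo hi i = wid_box lo hi i / (\<Sum>j\<in>posidx n lo hi. wid_box lo hi j)"

definition sig_lo :: "nat \<Rightarrow> (nat \<Rightarrow> real) \<Rightarrow> real" where
  "sig_lo n lo = (\<Sum>i<n. lo i)"

definition sig_hi :: "nat \<Rightarrow> (nat \<Rightarrow> real) \<Rightarrow> real" where
  "sig_hi n hi = (\<Sum>i<n. hi i)"

definition fu :: "nat \<Rightarrow> (nat \<Rightarrow> real) \<Rightarrow> (nat \<Rightarrow> real) \<Rightarrow> (real \<Rightarrow> real) \<Rightarrow> real \<Rightarrow> nat \<Rightarrow> real \<Rightarrow> real" where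
  "fu n lo hi \<phi> s i x =
     (if i \<in> posidx n lo hi then
        \<phi> (min (x - hi i + sig_hi n hi) s) + \<phi> (max (x - lo i + sig_lo n lo) s)
          - (2 - theta n lo hi i) * \<phi> s
      else 0)"

end

theory Submission imports Defs begin

text \<open>Put \<open>\<sigma> = \<Sum>\<^sub>j x\<^sub>j\<close>.  For \<open>i \<in> P\<close> the two arguments of \<open>\<phi>\<close> in \<open>f\<^sup>u\<^sub>i\<close> are \<open>\<sigma>* - a\<^sub>i\<close>
  and \<open>\<sigma>* + b\<^sub>i\<close>, where \<open>a\<^sub>i \<ge> 0\<close> is the amount by which \<open>x\<^sub>i - hi\<^sub>i + \<Sum>\<^sub>j hi\<^sub>j\<close> falls
  short of \<open>\<sigma>*\<close> and \<open>b\<^sub>i \<ge> 0\<close> the amount by which \<open>x\<^sub>i - lo\<^sub>i + \<Sum>\<^sub>j lo\<^sub>j\<close> exceeds it.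
  As the \<open>\<theta>\<^sub>i\<close> sum to one, \<open>\<Sum> f\<^sup>u\<^sub>i\<close> is \<open>\<phi>(\<sigma>*)\<close> plus the increments
  \<open>\<phi>(\<sigma>* - a\<^sub>i) - \<phi>(\<sigma>*)\<close> and \<open>\<phi>(\<sigma>* + b\<^sub>i) - \<phi>(\<sigma>*)\<close>.  The \<open>a\<^sub>i\<close> add up to at most
  \<open>max (\<sigma>* - \<sigma>) 0\<close> and the \<open>b\<^sub>i\<close> to at most \<open>max (\<sigma> - \<sigma>*) 0\<close>, and increments of a convex
  function away from its minimiser are superadditive, so the sum is at most \<open>\<phi>(\<sigma>)\<close>.
  In the box of (ii) all \<open>a\<^sub>i\<close> and \<open>b\<^sub>i\<close> vanish.\<close>

lemma sum_max_diff_le: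
  fixes v :: "'a \<Rightarrow> real"
  assumes "finite A" "c \<ge> 0" "\<And>i. i \<in> A \<Longrightarrow> v i \<ge> 0"
  shows "(\<Sum>i\<in>A. max (v i - c) 0) \<le> max ((\<Sum>i\<in>A. v i) - c) 0"
  using assms
proof (induction A rule: finite_induct)
  case empty
  then show ?case by simp
next
  case (insert a A)
  have "(\<Sum>i\<in>A. max (v i - c) 0) \<le> max ((\<Sum>i\<in>A. v i) - c) 0"
    using insert by simp
  moreover have "(\<Sum>i\<in>A. v i) \<ge> 0" "v a \<ge> 0"
    using insert by (auto intro: sum_nonneg)
  ultimately show ?case
    using insert(1,2) \<open>c \<ge> 0\<close> by simp
qed

lemma convex_on_sum_increments_le:
  fixes \<phi> :: "'a::real_vector \<Rightarrow> real"
  assumes cvx: "convex_on A \<phi>" and s: "s \<in> A" and far: "s + T *\<^sub>R d \<in> A"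
    and up: "\<phi> s \<le> \<phi> (s + T *\<^sub>R d)"
    and "finite P" and t_nonneg: "\<And>i. i \<in> P \<Longrightarrow> t i \<ge> 0" and t_sum: "(\<Sum>i\<in>P. t i) \<le> T"
  shows "(\<Sum>i\<in>P. \<phi> (s + t i *\<^sub>R d) - \<phi> s) \<le> \<phi> (s + T *\<^sub>R d) - \<phi> s"
proof -
  define D where "D = \<phi> (s + T *\<^sub>R d) - \<phi> s"
  have chord: "\<phi> (s + t i *\<^sub>R d) - \<phi> s \<le> (t i / T) * D" if i: "i \<in> P" for i
  proof (cases "t i = 0")
    case False
    have "t i \<le> T"
      using member_le_sum[OF i, of t] t_nonneg \<open>finite P\<close> t_sum by auto
    with False t_nonneg[OF i] have T: "T > 0" "0 \<le> t i / T" "t i / T \<le> 1"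
      by auto
    have "s + t i *\<^sub>R d = (1 - t i / T) *\<^sub>R s + (t i / T) *\<^sub>R (s + T *\<^sub>R d)"
      using T by (simp add: algebra_simps)
    also have "\<phi> \<dots> \<le> (1 - t i / T) * \<phi> s + (t i / T) * \<phi> (s + T *\<^sub>R d)"
      using convex_onD[OF cvx T(2,3) s far] .
    finally show ?thesis
      by (simp add: D_def algebra_simps)
  qed simp
  have "(\<Sum>i\<in>P. \<phi> (s + t i *\<^sub>R d) - \<phi> s) \<le> (\<Sum>i\<in>P. (t i / T) * D)"
    using chord by (rule sum_mono)
  also have "\<dots> = ((\<Sum>i\<in>P. t i) / T) * D"
    by (simp add: sum_distrib_right sum_divide_distrib)
  also have "\<dots> \<le> D"
    using t_sum up sum_nonneg[of P t] t_nonneg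
    by (intro mult_left_le_one_le) (auto simp: D_def divide_le_eq_1)
  finally show ?thesis
    by (simp add: D_def)
qed

lemma sum_theta_posidx:
  assumes "\<exists>i<n. wid_box lo hi i > 0"
  shows "(\<Sum>i\<in>posidx n lo hi. theta n lo hi i) = 1"
proof -
  obtain k where k: "k \<in> posidx n lo hi"
    using assms by (auto simp: posidx_def)
  have "wid_box lo hi k \<le> (\<Sum>j\<in>posidx n lo hi. wid_box lo hi j)"
    by (rule member_le_sum[OF k]) (auto simp: posidx_def)
  with k have "(\<Sum>j\<in>posidx n lo hi. wid_box lo hi j) > 0"
    by (simp add: posidx_def)
  then show ?thesis
    by (simp add: theta_def sum_divide_distrib[symmetric])
qed

definition shortfall :: "nat \<Rightarrow> (nat \<Rightarrow> real) \<Rightarrow> real \<Rightarrow> (nat \<Rightarrow> real) \<Rightarrow> nat \<Rightarrow> real" where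
  "shortfall n hi s x i = max (s - (x i - hi i + sig_hi n hi)) 0"

definition excess :: "nat \<Rightarrow> (nat \<Rightarrow> real) \<Rightarrow> real \<Rightarrow> (nat \<Rightarrow> real) \<Rightarrow> nat \<Rightarrow> real" where
  "excess n lo s x i = max (x i - lo i + sig_lo n lo - s) 0"

lemma sum_fu_eq:
  assumes "\<exists>i<n. wid_box lo hi i > 0"
  shows "(\<Sum>i<n. fu n lo hi \<phi> s i (x i)) =
           (\<Sum>i\<in>posidx n lo hi. \<phi> (s - shortfall n hi s x i) - \<phi> s)
         + (\<Sum>i\<in>posidx n lo hi. \<phi> (s + excess n lo s x i) - \<phi> s) + \<phi> s"
proof -
  let ?P = "posidx n lo hi"
  have "(\<Sum>i<n. fu n lo hi \<phi> s i (x i)) = (\<Sum>i\<in>?P. fu n lo hi \<phi> s i (x i))"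
    by (rule sum.mono_neutral_right) (auto simp: fu_def posidx_def)
  also have "\<dots> = (\<Sum>i\<in>?P. (\<phi> (s - shortfall n hi s x i) - \<phi> s)
                    + (\<phi> (s + excess n lo s x i) - \<phi> s) + theta n lo hi i * \<phi> s)"
  proof (rule sum.cong[OF refl])
    fix i
    assume "i \<in> ?P"
    have min_eq: "min (x i - hi i + sig_hi n hi) s = s - shortfall n hi s x i"
      and max_eq: "max (x i - lo i + sig_lo n lo) s = s + excess n lo s x i"
      by (auto simp: shortfall_def excess_def)
    from \<open>i \<in> ?P\<close> show "fu n lo hi \<phi> s i (x i) = (\<phi> (s - shortfall n hi s x i) - \<phi> s)
                    + (\<phi> (s + excess n lo s x i) - \<phi> s) + theta n lo hi i * \<phi> s"
      unfolding fu_def min_eq max_eq by (simp add: algebra_simps)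
  qed
  also have "\<dots> = (\<Sum>i\<in>?P. \<phi> (s - shortfall n hi s x i) - \<phi> s)
                 + (\<Sum>i\<in>?P. \<phi> (s + excess n lo s x i) - \<phi> s)
                 + (\<Sum>i\<in>?P. theta n lo hi i) * \<phi> s"
    by (simp only: sum.distrib sum_distrib_right)
  finally show ?thesis
    using sum_theta_posidx[OF assms] by simp
qed

lemma sum_fu_le:
  assumes somepos: "\<exists>i<n. wid_box lo hi i > 0"
    and cvx: "convex_on {sig_lo n lo .. sig_hi n hi} \<phi>"
    and smem: "s \<in> {sig_lo n lo .. sig_hi n hi}"
    and smin: "\<forall>t\<in>{sig_lo n lo .. sig_hi n hi}. \<phi> s \<le> \<phi> t"
    and x: "\<forall>i<n. x i \<in> {lo i .. hi i}"
  shows "(\<Sum>i<n. fu n lo hi \<phi> s i (x i)) \<le> \<phi> (\<Sum>i<n. x i)"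
proof -
  define \<sigma> where "\<sigma> = (\<Sum>i<n. x i)"
  let ?P = "posidx n lo hi" and ?L = "sig_lo n lo" and ?H = "sig_hi n hi"
  have P: "?P \<subseteq> {..<n}" "finite ?P"
    by (auto simp: posidx_def)
  have \<sigma>: "?L \<le> \<sigma>" "\<sigma> \<le> ?H"
    unfolding \<sigma>_def sig_lo_def sig_hi_def using x by (auto intro: sum_mono)
  have "(\<Sum>i\<in>?P. shortfall n hi s x i) = (\<Sum>i\<in>?P. max ((hi i - x i) - (?H - s)) 0)"
    by (simp add: shortfall_def algebra_simps)
  also have "\<dots> \<le> max ((\<Sum>i\<in>?P. hi i - x i) - (?H - s)) 0"
    using P x smem by (intro sum_max_diff_le) auto
  also have "(\<Sum>i\<in>?P. hi i - x i) \<le> (\<Sum>i<n. hi i - x i)"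
    using P x by (intro sum_mono2) auto
  then have "max ((\<Sum>i\<in>?P. hi i - x i) - (?H - s)) 0 \<le> max (s - \<sigma>) 0"
    by (simp add: \<sigma>_def sig_hi_def sum_subtractf)
  finally have shortfall_le: "(\<Sum>i\<in>?P. shortfall n hi s x i) \<le> max (s - \<sigma>) 0" .
  have "(\<Sum>i\<in>?P. excess n lo s x i) = (\<Sum>i\<in>?P. max ((x i - lo i) - (s - ?L)) 0)"
    by (simp add: excess_def algebra_simps)
  also have "\<dots> \<le> max ((\<Sum>i\<in>?P. x i - lo i) - (s - ?L)) 0"
    using P x smem by (intro sum_max_diff_le) auto
  also have "(\<Sum>i\<in>?P. x i - lo i) \<le> (\<Sum>i<n. x i - lo i)"
    using P x by (intro sum_mono2) auto
  then have "max ((\<Sum>i\<in>?P. x i - lo i) - (s - ?L)) 0 \<le> max (\<sigma> - s) 0"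
    by (simp add: \<sigma>_def sig_lo_def sum_subtractf)
  finally have excess_le: "(\<Sum>i\<in>?P. excess n lo s x i) \<le> max (\<sigma> - s) 0" .
  have up: "\<phi> s \<le> \<phi> (s - max (s - \<sigma>) 0)" "\<phi> s \<le> \<phi> (s + max (\<sigma> - s) 0)"
    using smin \<sigma> smem by (auto simp: max_def)
  have "(\<Sum>i\<in>?P. \<phi> (s + shortfall n hi s x i *\<^sub>R -1) - \<phi> s)
          \<le> \<phi> (s + max (s - \<sigma>) 0 *\<^sub>R -1) - \<phi> s"
    using \<sigma> smem up P(2) shortfall_le
    by (intro convex_on_sum_increments_le[OF cvx]) (auto simp: shortfall_def)
  moreover have "(\<Sum>i\<in>?P. \<phi> (s + excess n lo s x i *\<^sub>R 1) - \<phi> s)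
          \<le> \<phi> (s + max (\<sigma> - s) 0 *\<^sub>R 1) - \<phi> s"
    using \<sigma> smem up P(2) excess_le
    by (intro convex_on_sum_increments_le[OF cvx]) (auto simp: excess_def)
  moreover have "\<phi> (s - max (s - \<sigma>) 0) - \<phi> s + (\<phi> (s + max (\<sigma> - s) 0) - \<phi> s) + \<phi> s = \<phi> \<sigma>"
    by (cases "s \<le> \<sigma>") auto
  ultimately show ?thesis
    using sum_fu_eq[OF somepos, of \<phi> s x] by (simp add: \<sigma>_def)
qed

lemma sum_fu_eq_min:
  assumes "\<exists>i<n. wid_box lo hi i > 0"
    and x: "\<forall>i<n. x i \<in> {s + hi i - sig_hi n hi .. s + lo i - sig_lo n lo}"
  shows "(\<Sum>i<n. fu n lo hi \<phi> s i (x i)) = \<phi> s"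
proof -
  have "shortfall n hi s x i = 0" "excess n lo s x i = 0" if "i \<in> posidx n lo hi" for i
    using that x by (auto simp: shortfall_def excess_def posidx_def)
  then show ?thesis
    using sum_fu_eq[OF assms(1)] by simp
qed

theorem mainTheorem5:
  fixes n :: nat and lo hi :: "nat \<Rightarrow> real" and \<phi> :: "real \<Rightarrow> real" and s :: real
  assumes box: "\<forall>i<n. lo i \<le> hi i"
    and somepos: "\<exists>i<n. wid_box lo hi i > 0"
    and cvx: "convex_on {sig_lo n lo .. sig_hi n hi} \<phi>"
    and smem: "s \<in> {sig_lo n lo .. sig_hi n hi}"
    and smin: "\<forall>t\<in>{sig_lo n lo .. sig_hi n hi}. \<phi> s \<le> \<phi> t"
  shows "(\<forall>x. (\<forall>i<n. x i \<in> {lo i .. hi i}) \<longrightarrow>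
            (\<Sum>i<n. fu n lo hi \<phi> s i (x i)) \<le> \<phi> (\<Sum>i<n. x i))
       \<and> (\<forall>x. (\<forall>i<n. x i \<in> {lo i .. hi i}
                 \<and> x i \<in> {s + hi i - sig_hi n hi .. s + lo i - sig_lo n lo}) \<longrightarrow>
            (\<Sum>i<n. fu n lo hi \<phi> s i (x i)) = \<phi> s)"
  using sum_fu_le[OF somepos cvx smem smin] sum_fu_eq_min[OF somepos] by blast

end
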